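(* Let $Y$ and $X_1,\ldots,X_m$ be real-valued square integrable random variables on a common probability space, write $\mathbf{X}=(X_1,\ldots,X_m)$ and fix $k\in\{1,\ldots,m\}$. Then: (a) If $\beta=(\beta_0,\beta_j)_{j\neq k}$ is the minimizer over $\beta'\in\mathbb{R}^m$ of $E[(X_k-\beta'_0-\sum_{j\neq k}\beta'_jX_j)^2]$ and $\tilde X_k=X_k-\beta_0-\sum_{j\neq k}\beta_jX_j$, then $\iota^{lin}_{X_k\mid X_j,\,j\neq k}(Y)=\iota^{lin}_{\tilde X_k}(Y)$. (b) If $\theta=(\theta_0,\theta_1,\ldots,\theta_m)$ is the minimizer over $\theta'\in\mathbb{R}^{m+1}$ of $E[(Y-\theta'_0-\sum_{j=1}^m\theta'_jX_j)^2]$, then $|\theta_k|=\iota^{lin}_{X_k\mid X_j,\,j\neq k}(Y)/\iota^{lin}_{X_k\mid X_j,\,j\neq k}(X_k)$. (c) $\iota_{X_k\mid X_j,\,j\neq k}(Y)\ge \iota^{lin}_{X_k\mid X_j,\,j\neq k}(Y)$ and $\iota_{X_k\mid X_j,\,j\neq k}(X_k)=\iota^{lin}_{X_k\mid X_j,\,j\neq k}(X_k)$. (d) If $X_k$ and $\{X_j: j\neq k\}$ are stochastically independent, then $\iota^{lin}_{X_k\mid X_j,\,j\neq k}(Y)=\iota^{lin}_{X_k}(Y)$. (e) If $E(Y\mid\mathbf{X})=\theta_0+\sum_{j=1}^m\theta_jX_j$ for real constants $\theta_j$, then $\iota_{X_k\mid X_j,\,j\neq k}(Y)=\iota^{lin}_{X_k\mid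 X_j,\,j\neq k}(Y)$.
   Context: Partial mean impact: with $\mathcal{H}_k=\{\delta(\mathbf{X})\in L^2:\ \delta \text{ measurable},\ E[\delta(\mathbf{X})]=0,\ E[\delta^2(\mathbf{X})]=1,\ E[X_j\delta(\mathbf{X})]=0\ \forall j\neq k\}$, set $\iota_{X_k\mid X_j,\,j\neq k}(Z)=\sup_{\delta(\mathbf{X})\in\mathcal{H}_k}E[Z\delta(\mathbf{X})]$ for square integrable $Z$. Partial linear mean impact: with $\mathcal{H}^{lin}_k=\{\delta(\mathbf{X})=\eta_0+\sum_{j=1}^m\eta_jX_j,\ \eta\in\mathbb{R}^{m+1}:\ E[\delta(\mathbf{X})]=0,\ E[\delta^2(\mathbf{X})]=1,\ E[X_j\delta(\mathbf{X})]=0\ \forall j\neq k\}$, set $\iota^{lin}_{X_k\mid X_j,\,j\neq k}(Z)=\sup_{\delta(\mathbf{X})\in\mathcal{H}^{lin}_k}E[Z\delta(\mathbf{X})]$. (Bivariate) linear mean impact of a square integrable random variable $W$ on $Z$: $\iota^{lin}_W(Z)=\sup\{E[Z\delta(W)]:\ \delta(w)=a+bw,\ E[\delta(W)]=0,\ E[\delta^2(W)]=1\}$, which equals $|\operatorname{Cov}(Z,W)|/\operatorname{SD}(W)$. *)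

theory Defs
  imports "HOL-Probability.Probability"
begin

definition sq_int :: "'a measure \<Rightarrow> ('a \<Rightarrow> real) \<Rightarrow> bool" where
  "sq_int M f \<longleftrightarrow> f \<in> borel_measurable M \<and> integrable M (\<lambda>w. (f w)^2)"

definition vecX :: "nat \<Rightarrow> (nat \<Rightarrow> 'a \<Rightarrow> real) \<Rightarrow> 'a \<Rightarrow> (nat \<Rightarrow> real)" where
  "vecX m X = (\<lambda>w. \<lambda>j\<in>{1..m}. X j w)"

definition H_set :: "'a measure \<Rightarrow> nat \<Rightarrow> (nat \<Rightarrow> 'a \<Rightarrow> real) \<Rightarrow> nat \<Rightarrow> ('a \<Rightarrow> real) set" where
  "H_set M m X k = {d. (\<exists>g \<in> borel_measurable (PiM {1..m} (\<lambda>_. borel)). d = (\<lambda>w. g (vecX m X w)))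
      \<and> sq_int M d
      \<and> integral\<^sup>L M d = 0
      \<and> integral\<^sup>L M (\<lambda>w. (d w)^2) = 1
      \<and> (\<forall>j\<in>{1..m}. j \<noteq> k \<longrightarrow> integral\<^sup>L M (\<lambda>w. X j w * d w) = 0)}"

definition H_lin_set :: "'a measure \<Rightarrow> nat \<Rightarrow> (nat \<Rightarrow> 'a \<Rightarrow> real) \<Rightarrow> nat \<Rightarrow> ('a \<Rightarrow> real) set" where
  "H_lin_set M m X k = {d. (\<exists>\<eta> :: nat \<Rightarrow> real. d = (\<lambda>w. \<eta> 0 + (\<Sum>j=1..m. \<eta> j * X j w)))
      \<and> integral\<^sup>L M d = 0
      \<and> integral\<^sup>L M (\<lambda>w. (d w)^2) = 1
      \<and> (\<forall>j\<in>{1..m}. j \<noteq> k \<longrightarrow> integral\<^sup>L M (\<lambda>w. X j w * d w) = 0)}"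

definition partial_impact :: "'a measure \<Rightarrow> nat \<Rightarrow> (nat \<Rightarrow> 'a \<Rightarrow> real) \<Rightarrow> nat \<Rightarrow> ('a \<Rightarrow> real) \<Rightarrow> real" where
  "partial_impact M m X k Z = Sup ((\<lambda>d. integral\<^sup>L M (\<lambda>w. Z w * d w)) ` H_set M m X k)"

definition partial_lin_impact :: "'a measure \<Rightarrow> nat \<Rightarrow> (nat \<Rightarrow> 'a \<Rightarrow> real) \<Rightarrow> nat \<Rightarrow> ('a \<Rightarrow> real) \<Rightarrow> real" where
  "partial_lin_impact M m X k Z = Sup ((\<lambda>d. integral\<^sup>L M (\<lambda>w. Z w * d w)) ` H_lin_set M m X k)"

definition lin_impact :: "'a measure \<Rightarrow> ('a \<Rightarrow> real) \<Rightarrow> ('a \<Rightarrow> real) \<Rightarrow> real" where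
  "lin_impact M W Z = Sup ((\<lambda>(a,b). integral\<^sup>L M (\<lambda>w. Z w * (a + b * W w))) `
      {(a::real, b::real). integral\<^sup>L M (\<lambda>w. a + b * W w) = 0
                         \<and> integral\<^sup>L M (\<lambda>w. (a + b * W w)^2) = 1})"

definition sigX :: "'a measure \<Rightarrow> nat \<Rightarrow> (nat \<Rightarrow> 'a \<Rightarrow> real) \<Rightarrow> 'a measure" where
  "sigX M m X = vimage_algebra (space M) (vecX m X) (PiM {1..m} (\<lambda>_. borel))"

end

theory Submission
  imports Defs
begin

text \<open>
  Let \<open>R\<close> be the residual of \<open>X\<^sub>k\<close> after projecting onto the
  affine span of the \<open>X\<^sub>j\<close>, \<open>j \<noteq> k\<close>: it is centred and uncorrelated with these \<open>X\<^sub>j\<close> (the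
  normal equations, which every least-squares fit satisfies and Gram-Schmidt attains), and
  non-degeneracy makes it non-zero. Every \<open>\<delta> \<in> H\<^sub>k\<^sup>l\<^sup>i\<^sup>n\<close> is a multiple of \<open>R\<close>, because its
  component in that affine span is orthogonal to itself; hence
  \<open>\<iota>\<^sup>l\<^sup>i\<^sup>n(Z) = |E[Z R]| / \<parallel>R\<parallel>\<close>, which is also the bivariate linear impact of \<open>R\<close>. This gives (a),
  and (d) because under independence \<open>R = X\<^sub>k - E X\<^sub>k\<close>. Every \<open>\<delta> \<in> H\<^sub>k\<close> is uncorrelated with
  the \<open>X\<^sub>j\<close>, \<open>j \<noteq> k\<close>, so \<open>E[X\<^sub>k \<delta>] = E[R \<delta>] \<le> \<parallel>R\<parallel>\<close> by Cauchy-Schwarz, which gives (c).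
  Finally, for affine \<open>L = \<theta>\<^sub>0 + \<Sum>\<^sub>j \<theta>\<^sub>j X\<^sub>j\<close> and such \<open>\<delta>\<close> one has \<open>E[L \<delta>] = \<theta>\<^sub>k E[R \<delta>]\<close>.
  For the least-squares fit of \<open>Y\<close> this yields \<open>E[Y R] = \<theta>\<^sub>k \<parallel>R\<parallel>\<^sup>2\<close>, hence (b); for
  \<open>L = E(Y | X)\<close> it bounds \<open>\<iota>(Y)\<close> by \<open>|\<theta>\<^sub>k| \<parallel>R\<parallel> = \<iota>\<^sup>l\<^sup>i\<^sup>n(Y)\<close>, hence (e).
\<close>

section \<open>Square integrable functions\<close>

lemma sq_int_integrable_mult:
  assumes "sq_int M f" "sq_int M g"
  shows "integrable M (\<lambda>w. f w * g w)"
proof (rule Bochner_Integration.integrable_bound)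
  show "integrable M (\<lambda>w. (f w)^2 + (g w)^2)"
    using assms unfolding sq_int_def by auto
  show "(\<lambda>w. f w * g w) \<in> borel_measurable M"
    using assms unfolding sq_int_def by auto
  have "\<bar>a * b\<bar> \<le> a^2 + b^2" for a b :: real
  proof -
    have "2 * \<bar>a\<bar> * \<bar>b\<bar> \<le> \<bar>a\<bar>^2 + \<bar>b\<bar>^2"
      by (rule sum_squares_bound)
    moreover have "0 \<le> \<bar>a\<bar> * \<bar>b\<bar>"
      by simp
    ultimately show ?thesis
      unfolding abs_mult power2_abs by linarith
  qed
  then show "AE w in M. norm (f w * g w) \<le> norm ((f w)^2 + (g w)^2)"
    by (auto intro!: AE_I2)
qed

lemma sq_int_add:
  assumes "sq_int M f" "sq_int M g"
  shows "sq_int M (\<lambda>w. f w + g w)"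
proof -
  have "integrable M (\<lambda>w. (f w)^2 + (g w)^2 + 2 * (f w * g w))"
    using assms sq_int_integrable_mult[OF assms] unfolding sq_int_def by auto
  then show ?thesis
    using assms unfolding sq_int_def power2_sum by (auto simp: mult.assoc)
qed

lemma sq_int_cmult: "sq_int M f \<Longrightarrow> sq_int M (\<lambda>w. c * f w)"
  unfolding sq_int_def by (auto simp: power_mult_distrib)

lemma sq_int_diff: "sq_int M f \<Longrightarrow> sq_int M g \<Longrightarrow> sq_int M (\<lambda>w. f w - g w)"
  using sq_int_add[of M f "\<lambda>w. - 1 * g w"] sq_int_cmult[of M g "- 1"] by simp

lemma integral_square_diff_scaled:
  assumes "sq_int M f" "sq_int M g"
  shows "(\<integral>w. (f w - t * g w)^2 \<partial>M)
    = (\<integral>w. (f w)^2 \<partial>M) - 2 * t * (\<integral>w. f w * g w \<partial>M) + t^2 * (\<integral>w. (g w)^2 \<partial>M)"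
proof -
  have "(\<lambda>w. (f w - t * g w)^2) = (\<lambda>w. (f w)^2 - 2 * t * (f w * g w) + t^2 * (g w)^2)"
    by (auto simp: power2_diff power_mult_distrib algebra_simps)
  then show ?thesis
    using assms sq_int_integrable_mult[OF assms] unfolding sq_int_def by simp
qed

lemma quadratic_nonneg_imp_discriminant:
  fixes a b c :: real
  assumes "c \<ge> 0" "\<And>t. 0 \<le> a - 2 * t * b + t^2 * c"
  shows "b^2 \<le> a * c"
proof (cases "c = 0")
  case True
  show ?thesis
  proof (rule ccontr)
    assume "\<not> ?thesis"
    with True have "b \<noteq> 0" by simp
    then have "2 * ((a + 1) / (2 * b)) * b = a + 1" by simp
    with True assms(2)[of "(a + 1) / (2 * b)"] show False by simp
  qed
next
  case False
  with assms have "0 < c" by simp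
  with assms(2)[of "b / c"] show ?thesis
    by (simp add: field_simps power2_eq_square)
qed

lemma Cauchy_Schwarz_integral:
  assumes "sq_int M f" "sq_int M g"
  shows "\<bar>\<integral>w. f w * g w \<partial>M\<bar> \<le> sqrt (\<integral>w. (f w)^2 \<partial>M) * sqrt (\<integral>w. (g w)^2 \<partial>M)"
proof -
  have "0 \<le> (\<integral>w. (f w - t * g w)^2 \<partial>M)" for t
    by simp
  then have "(\<integral>w. f w * g w \<partial>M)^2 \<le> (\<integral>w. (f w)^2 \<partial>M) * (\<integral>w. (g w)^2 \<partial>M)"
    unfolding integral_square_diff_scaled[OF assms]
    by (intro quadratic_nonneg_imp_discriminant) auto
  then show ?thesis
    by (metis real_sqrt_abs real_sqrt_le_mono real_sqrt_mult)
qed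

lemma integral_mult_eq_0_if_minimal:
  assumes "sq_int M f" "sq_int M g"
    and "\<And>t. (\<integral>w. (f w)^2 \<partial>M) \<le> (\<integral>w. (f w - t * g w)^2 \<partial>M)"
  shows "(\<integral>w. f w * g w \<partial>M) = 0"
proof -
  have "(\<integral>w. f w * g w \<partial>M)^2 \<le> 0 * (\<integral>w. (g w)^2 \<partial>M)"
    using assms(3) unfolding integral_square_diff_scaled[OF assms(1,2)]
    by (intro quadratic_nonneg_imp_discriminant) (auto simp: algebra_simps)
  then show ?thesis by simp
qed

context prob_space
begin

lemma sq_int_const: "sq_int M (\<lambda>w. c)"
  unfolding sq_int_def by simp

lemma sq_int_integrable: "sq_int M f \<Longrightarrow> integrable M f"
  using sq_int_integrable_mult[of M f "\<lambda>_. 1"] sq_int_const[of 1] by simp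

lemma sq_int_sum:
  "finite J \<Longrightarrow> (\<And>j. j \<in> J \<Longrightarrow> sq_int M (F j)) \<Longrightarrow> sq_int M (\<lambda>w. \<Sum>j\<in>J. F j w)"
  by (induction J rule: finite_induct) (auto intro: sq_int_add simp: sq_int_const)

end

section \<open>Affine combinations and residuals\<close>

text \<open>Index 0 of a coefficient vector holds the intercept, so index sets of regressors never
  contain 0.\<close>

definition affine_comb :: "(nat \<Rightarrow> 'a \<Rightarrow> real) \<Rightarrow> (nat \<Rightarrow> real) \<Rightarrow> nat set \<Rightarrow> 'a \<Rightarrow> real" where
  "affine_comb X c J w = c 0 + (\<Sum>j\<in>J. c j * X j w)"

definition residual ::
    "(nat \<Rightarrow> 'a \<Rightarrow> real) \<Rightarrow> ('a \<Rightarrow> real) \<Rightarrow> (nat \<Rightarrow> real) \<Rightarrow> nat set \<Rightarrow> 'a \<Rightarrow> real" where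
  "residual X f c J w = f w - c 0 - (\<Sum>j\<in>J. c j * X j w)"

definition orth_affine :: "'a measure \<Rightarrow> (nat \<Rightarrow> 'a \<Rightarrow> real) \<Rightarrow> nat set \<Rightarrow> ('a \<Rightarrow> real) \<Rightarrow> bool" where
  "orth_affine M X J g \<longleftrightarrow> (\<integral>w. g w \<partial>M) = 0 \<and> (\<forall>j\<in>J. (\<integral>w. X j w * g w \<partial>M) = 0)"

lemma residual_eq_diff_affine_comb: "residual X f c J = (\<lambda>w. f w - affine_comb X c J w)"
  by (simp add: residual_def affine_comb_def fun_eq_iff)

lemma residual_shift_intercept:
  "0 \<notin> J \<Longrightarrow> residual X f (c(0 := c 0 + s)) J w = residual X f c J w - s"
  unfolding residual_def by (auto intro!: sum.cong)

lemma residual_shift_coeff: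
  assumes "finite J" "j \<in> J" "0 \<notin> J"
  shows "residual X f (c(j := c j + s)) J w = residual X f c J w - s * X j w"
proof -
  have "(c(j := c j + s)) l * X l w = c l * X l w + (if l = j then s * X j w else 0)" for l
    by (simp add: distrib_right)
  then have "(\<Sum>l\<in>J. (c(j := c j + s)) l * X l w) = (\<Sum>l\<in>J. c l * X l w) + s * X j w"
    using assms(1,2) by (simp add: sum.distrib)
  moreover have "j \<noteq> 0"
  proof
    assume "j = 0"
    with assms(2,3) show False by simp
  qed
  ultimately show ?thesis
    unfolding residual_def by simp
qed

lemma affine_comb_mult: "b * affine_comb X c J w = affine_comb X (\<lambda>j. b * c j) J w"
  by (simp add: affine_comb_def distrib_left sum_distrib_left mult.assoc)

lemma affine_comb_remove:
  assumes "finite J" "j \<in> J" "j \<noteq> 0"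
  shows "affine_comb X c J w = c j * X j w + affine_comb X c (J - {j}) w"
  using assms unfolding affine_comb_def by (simp add: sum.remove)

lemma residual_insert:
  assumes "finite J" "a \<notin> J" "a \<noteq> 0"
  shows "residual X f (\<lambda>j. if j = a then t else c j - t * d j) (insert a J) w
    = residual X f c J w - t * residual X (X a) d J w"
proof -
  have "(\<Sum>j\<in>J. (if j = a then t else c j - t * d j) * X j w)
      = (\<Sum>j\<in>J. c j * X j w) - t * (\<Sum>j\<in>J. d j * X j w)"
    unfolding sum_distrib_left sum_subtractf[symmetric] using assms(2)
    by (intro sum.cong) (auto simp: algebra_simps)
  with assms show ?thesis
    unfolding residual_def by (simp add: algebra_simps)
qed

context prob_space
begin

lemma sq_int_affine_comb:
  assumes "finite J" "\<And>j. j \<in> J \<Longrightarrow> sq_int M (X j)"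
  shows "sq_int M (affine_comb X c J)"
  unfolding affine_comb_def[abs_def]
  using assms by (intro sq_int_add sq_int_const sq_int_sum sq_int_cmult) auto

lemma sq_int_residual:
  assumes "finite J" "\<And>j. j \<in> J \<Longrightarrow> sq_int M (X j)" "sq_int M f"
  shows "sq_int M (residual X f c J)"
  unfolding residual_eq_diff_affine_comb
  using assms by (intro sq_int_diff sq_int_affine_comb)

lemma integral_mult_affine_comb:
  assumes "finite J" "\<And>j. j \<in> J \<Longrightarrow> sq_int M (X j)" "sq_int M g"
  shows "(\<integral>w. g w * affine_comb X c J w \<partial>M)
    = c 0 * (\<integral>w. g w \<partial>M) + (\<Sum>j\<in>J. c j * (\<integral>w. X j w * g w \<partial>M))"
proof -
  have int: "integrable M g" "\<And>j. j \<in> J \<Longrightarrow> integrable M (\<lambda>w. X j w * g w)"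
    using assms sq_int_integrable_mult sq_int_integrable by blast+
  have "(\<lambda>w. g w * affine_comb X c J w) = (\<lambda>w. c 0 * g w + (\<Sum>j\<in>J. c j * (X j w * g w)))"
    by (auto simp: affine_comb_def algebra_simps sum_distrib_left)
  then show ?thesis
    using int by (simp add: integral_sum)
qed

lemma orth_affine_integral_affine_comb:
  assumes "finite J" "\<And>j. j \<in> J \<Longrightarrow> sq_int M (X j)" "sq_int M g" "orth_affine M X J g"
  shows "(\<integral>w. g w * affine_comb X c J w \<partial>M) = 0"
  using assms by (simp add: integral_mult_affine_comb orth_affine_def)

lemma orth_affine_integral_residual:
  assumes "finite J" "\<And>j. j \<in> J \<Longrightarrow> sq_int M (X j)" "sq_int M g" "orth_affine M X J g"
    and "sq_int M f"
  shows "(\<integral>w. g w * residual X f c J w \<partial>M) = (\<integral>w. g w * f w \<partial>M)"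
proof -
  have "(\<integral>w. g w * residual X f c J w \<partial>M)
      = (\<integral>w. g w * f w \<partial>M) - (\<integral>w. g w * affine_comb X c J w \<partial>M)"
    unfolding residual_eq_diff_affine_comb right_diff_distrib
    using assms sq_int_integrable_mult sq_int_affine_comb
    by (intro Bochner_Integration.integral_diff) auto
  then show ?thesis
    using orth_affine_integral_affine_comb[OF assms(1-4)] by simp
qed

lemma orth_affine_diff_scaled:
  assumes "\<And>j. j \<in> J \<Longrightarrow> sq_int M (X j)" "sq_int M g" "sq_int M h"
    and "orth_affine M X J g" "orth_affine M X J h"
  shows "orth_affine M X J (\<lambda>w. g w - t * h w)"
proof -
  have "(\<integral>w. X j w * (g w - t * h w) \<partial>M)
      = (\<integral>w. X j w * g w \<partial>M) - t * (\<integral>w. X j w * h w \<partial>M)" if "j \<in> J" for j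
  proof -
    have "integrable M (\<lambda>w. X j w * g w)" "integrable M (\<lambda>w. X j w * h w)"
      using assms that sq_int_integrable_mult by auto
    then show ?thesis
      unfolding right_diff_distrib mult.left_commute[of "X j _" t]
      by (simp add: Bochner_Integration.integral_diff)
  qed
  then show ?thesis
    using assms sq_int_integrable unfolding orth_affine_def by auto
qed

lemma orth_residual_insert:
  assumes J: "finite J" "a \<notin> J" "a \<noteq> 0" "\<And>j. j \<in> J \<Longrightarrow> sq_int M (X j)"
    and X_a: "sq_int M (X a)" and f: "sq_int M f"
    and orth_f: "orth_affine M X J (residual X f c J)"
    and orth_a: "orth_affine M X J (residual X (X a) d J)"
  shows "\<exists>c'. orth_affine M X (insert a J) (residual X f c' (insert a J))"
proof -
  define rf where "rf = residual X f c J"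
  define ra where "ra = residual X (X a) d J"
  have rf: "sq_int M rf" and ra: "sq_int M ra"
    unfolding rf_def ra_def using J(1,4) X_a f by (auto intro: sq_int_residual)
  \<comment> \<open>Gram-Schmidt: remove from rf its component along ra.\<close>
  define t where "t = (\<integral>w. ra w * rf w \<partial>M) / (\<integral>w. (ra w)^2 \<partial>M)"
  have orth_J: "orth_affine M X J (\<lambda>w. rf w - t * ra w)"
    using J(4) rf ra orth_f orth_a unfolding rf_def ra_def by (intro orth_affine_diff_scaled)
  have rf_ra: "(\<integral>w. ra w * rf w \<partial>M) = t * (\<integral>w. (ra w)^2 \<partial>M)"
  proof (cases "(\<integral>w. (ra w)^2 \<partial>M) = 0")
    case True
    then show ?thesis
      using Cauchy_Schwarz_integral[OF ra rf] by simp
  qed (simp add: t_def)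
  have "(\<integral>w. X a w * (rf w - t * ra w) \<partial>M) = (\<integral>w. (rf w - t * ra w) * ra w \<partial>M)"
    using orth_affine_integral_residual[OF J(1,4) _ orth_J X_a, of d]
      sq_int_diff[OF rf sq_int_cmult[OF ra]]
    unfolding ra_def by (simp add: mult.commute)
  also have "\<dots> = (\<integral>w. ra w * rf w - t * (ra w)^2 \<partial>M)"
    by (simp add: algebra_simps power2_eq_square)
  also have "\<dots> = (\<integral>w. ra w * rf w \<partial>M) - t * (\<integral>w. (ra w)^2 \<partial>M)"
    using sq_int_integrable_mult[OF ra rf] ra unfolding sq_int_def
    by (simp add: Bochner_Integration.integral_diff)
  finally have "(\<integral>w. X a w * (rf w - t * ra w) \<partial>M) = 0"
    using rf_ra by simp
  with orth_J have "orth_affine M X (insert a J) (\<lambda>w. rf w - t * ra w)"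
    unfolding orth_affine_def by simp
  then show ?thesis
    unfolding rf_def ra_def residual_insert[OF J(1-3), symmetric] by blast
qed

lemma orth_residual_exists:
  assumes "finite J" "0 \<notin> J" "\<And>j. j \<in> J \<Longrightarrow> sq_int M (X j)" "sq_int M f"
  shows "\<exists>c. orth_affine M X J (residual X f c J)"
  using assms
proof (induction J arbitrary: f rule: finite_induct)
  case empty
  have "orth_affine M X {} (residual X f (\<lambda>_. \<integral>w. f w \<partial>M) {})"
    using sq_int_integrable[OF empty(3)] by (simp add: orth_affine_def residual_def prob_space)
  then show ?case by blast
next
  case (insert a J)
  then have X: "\<And>j. j \<in> J \<Longrightarrow> sq_int M (X j)" "sq_int M (X a)"
    and J: "0 \<notin> J" and a: "a \<noteq> 0"
    by auto
  obtain c where c: "orth_affine M X J (residual X f c J)"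
    using insert.IH[OF J X(1) insert.prems(3)] by blast
  obtain d where d: "orth_affine M X J (residual X (X a) d J)"
    using insert.IH[OF J X(1) X(2)] by blast
  show ?case
    using insert.hyps a X insert.prems(3) c d by (rule orth_residual_insert)
qed

lemma least_squares_imp_orth_affine:
  assumes "finite J" "0 \<notin> J" "\<And>j. j \<in> J \<Longrightarrow> sq_int M (X j)" "sq_int M f"
    and min: "\<And>c'. (\<integral>w. (residual X f c J w)^2 \<partial>M) \<le> (\<integral>w. (residual X f c' J w)^2 \<partial>M)"
  shows "orth_affine M X J (residual X f c J)"
proof -
  let ?r = "residual X f c J"
  have r: "sq_int M ?r"
    using assms by (intro sq_int_residual)
  have "(\<integral>w. ?r w * 1 \<partial>M) = 0"
  proof (rule integral_mult_eq_0_if_minimal[OF r sq_int_const])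
    show "(\<integral>w. (?r w)^2 \<partial>M) \<le> (\<integral>w. (?r w - t * 1)^2 \<partial>M)" for t
      using min[of "c(0 := c 0 + t)"] residual_shift_intercept[OF assms(2), of X f c t] by simp
  qed
  moreover have "(\<integral>w. ?r w * X j w \<partial>M) = 0" if "j \<in> J" for j
  proof (rule integral_mult_eq_0_if_minimal[OF r assms(3)[OF that]])
    show "(\<integral>w. (?r w)^2 \<partial>M) \<le> (\<integral>w. (?r w - t * X j w)^2 \<partial>M)" for t
      using min[of "c(j := c j + t)"] residual_shift_coeff[OF assms(1) that assms(2), of X f c t]
      by simp
  qed
  ultimately show ?thesis
    unfolding orth_affine_def by (simp add: mult.commute)
qed

end

section \<open>The bivariate linear mean impact\<close>

lemma abs_eq_inverse_sqrt:
  fixes b V :: real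
  assumes "b^2 * V = 1" "0 < V"
  shows "\<bar>b\<bar> = 1 / sqrt V"
proof -
  have "\<bar>b\<bar> * sqrt V = 1"
    using arg_cong[OF assms(1), of sqrt] assms(2) by (simp add: real_sqrt_mult)
  then show ?thesis
    using assms(2) by (simp add: field_simps)
qed

lemma Sup_scaled_eq_abs_div_sqrt:
  fixes A V :: real
  assumes "0 < V"
  shows "Sup {b * A | b. b^2 * V = 1} = \<bar>A\<bar> / sqrt V"
proof (rule cSup_eq_maximum)
  define \<sigma> :: real where "\<sigma> = (if 0 \<le> A then 1 else - 1)"
  have "\<sigma>^2 = 1" "\<sigma> * A = \<bar>A\<bar>"
    by (simp_all add: \<sigma>_def)
  then have "\<bar>A\<bar> / sqrt V = \<sigma> / sqrt V * A" "(\<sigma> / sqrt V)^2 * V = 1"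
    using assms by (simp_all add: power_divide)
  then show "\<bar>A\<bar> / sqrt V \<in> {b * A | b. b^2 * V = 1}"
    by blast
next
  fix x
  assume "x \<in> {b * A | b. b^2 * V = 1}"
  then obtain b where "x = b * A" "b^2 * V = 1"
    by blast
  moreover have "b * A \<le> \<bar>b\<bar> * \<bar>A\<bar>"
    using abs_ge_self[of "b * A"] by (simp add: abs_mult)
  ultimately show "x \<le> \<bar>A\<bar> / sqrt V"
    using abs_eq_inverse_sqrt assms by simp
qed

context prob_space
begin

lemma lin_impact_candidates_eq:
  assumes W: "sq_int M W"
  defines "c w \<equiv> W w - expectation W"
  shows "(\<lambda>(a, b). \<integral>w. Z w * (a + b * W w) \<partial>M) `
      {(a, b). (\<integral>w. a + b * W w \<partial>M) = 0 \<and> (\<integral>w. (a + b * W w)^2 \<partial>M) = 1}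
    = {b * (\<integral>w. Z w * c w \<partial>M) | b. b^2 * (\<integral>w. (c w)^2 \<partial>M) = 1}"
    (is "?lhs = ?rhs")
proof -
  have mean: "(\<integral>w. a + b * W w \<partial>M) = a + b * expectation W" for a b
    using sq_int_integrable[OF W] by (simp add: prob_space)
  have scaled: "(\<integral>w. Z w * (b * c w) \<partial>M) = b * (\<integral>w. Z w * c w \<partial>M)"
    "(\<integral>w. (b * c w)^2 \<partial>M) = b^2 * (\<integral>w. (c w)^2 \<partial>M)" for b
    by (simp_all add: mult.left_commute power_mult_distrib)
  show ?thesis
  proof (intro equalityI subsetI)
    fix x
    assume "x \<in> ?lhs"
    then obtain a b where ab: "(\<integral>w. a + b * W w \<partial>M) = 0" "(\<integral>w. (a + b * W w)^2 \<partial>M) = 1"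
        and x: "x = (\<integral>w. Z w * (a + b * W w) \<partial>M)"
      by auto
    from ab(1) have "a + b * W w = b * c w" for w
      unfolding mean c_def by (simp add: algebra_simps)
    with ab(2) x have "x = b * (\<integral>w. Z w * c w \<partial>M)" "b^2 * (\<integral>w. (c w)^2 \<partial>M) = 1"
      by (simp_all only: scaled)
    then show "x \<in> ?rhs"
      by blast
  next
    fix x
    assume "x \<in> ?rhs"
    then obtain b where b: "x = b * (\<integral>w. Z w * c w \<partial>M)" "b^2 * (\<integral>w. (c w)^2 \<partial>M) = 1"
      by blast
    have centred: "- b * expectation W + b * W w = b * c w" for w
      by (simp add: c_def algebra_simps)
    have "(\<integral>w. - b * expectation W + b * W w \<partial>M) = 0"
      unfolding mean by simp
    moreover have "(\<integral>w. (- b * expectation W + b * W w)^2 \<partial>M) = 1"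
      "x = (\<integral>w. Z w * (- b * expectation W + b * W w) \<partial>M)"
      using b by (simp_all only: centred scaled)
    ultimately show "x \<in> ?lhs"
      by (intro image_eqI[where x = "(- b * expectation W, b)"]) auto
  qed
qed

lemma lin_impact_eq_abs_cov_div_sd:
  assumes "sq_int M W" "0 < (\<integral>w. (W w - expectation W)^2 \<partial>M)"
  shows "lin_impact M W Z
    = \<bar>\<integral>w. Z w * (W w - expectation W) \<partial>M\<bar> / sqrt (\<integral>w. (W w - expectation W)^2 \<partial>M)"
  unfolding lin_impact_def lin_impact_candidates_eq[OF assms(1)]
  using assms(2) by (rule Sup_scaled_eq_abs_div_sqrt)

end

context prob_space
begin

lemma integral_mult_cond_exp_eq:
  assumes "subalgebra M F" and Y: "sq_int M Y" and L: "sq_int M L"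
    and cond_exp: "AE w in M. real_cond_exp M F Y w = L w"
    and f: "f \<in> borel_measurable F" "sq_int M f"
  shows "(\<integral>w. f w * Y w \<partial>M) = (\<integral>w. f w * L w \<partial>M)"
proof -
  interpret sigma_finite_subalgebra M F
    using assms(1) finite_measure_axioms finite_measure_subalgebra_is_sigma_finite
    unfolding finite_measure_subalgebra_def finite_measure_subalgebra_axioms_def by blast
  have "(\<integral>w. f w * Y w \<partial>M) = (\<integral>w. f w * real_cond_exp M F Y w \<partial>M)"
    using Y f sq_int_integrable_mult[OF f(2) Y] unfolding sq_int_def
    by (simp add: real_cond_exp_intg(2))
  also have "\<dots> = (\<integral>w. f w * L w \<partial>M)"
    using f L cond_exp unfolding sq_int_def by (intro integral_cong_AE) auto
  finally show ?thesis .
qed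

lemma indep_set_vimage_imp_integral_mult:
  assumes indep: "indep_set (sets (vimage_algebra (space M) U borel))
      (sets (vimage_algebra (space M) (\<lambda>w. \<lambda>j\<in>I. X j w) (PiM I (\<lambda>_. borel))))"
    and U: "sq_int M U" and X: "\<And>j. j \<in> I \<Longrightarrow> sq_int M (X j)" and j: "j \<in> I"
  shows "(\<integral>w. U w * X j w \<partial>M) = expectation U * expectation (X j)"
proof -
  let ?V = "\<lambda>w. \<lambda>j\<in>I. X j w"
  have "?V \<in> space M \<rightarrow> space (PiM I (\<lambda>_. borel))"
    using X unfolding sq_int_def by (auto intro!: measurable_space[OF measurable_restrict])
  then have "(\<lambda>x. x j) \<circ> ?V \<in> vimage_algebra (space M) ?V (PiM I (\<lambda>_. borel)) \<rightarrow>\<^sub>M borel"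
    using j by (intro measurable_comp[OF measurable_vimage_algebra1]) auto
  moreover have "(\<lambda>x. x j) \<circ> ?V = X j"
    using j by auto
  ultimately have sub: "sets (vimage_algebra (space M) (X j) borel)
      \<subseteq> sets (vimage_algebra (space M) ?V (PiM I (\<lambda>_. borel)))"
    by (intro sets_image_in_sets) auto
  have "indep_set (sets (vimage_algebra (space M) U borel))
      (sets (vimage_algebra (space M) (X j) borel))"
    unfolding indep_set_def
    by (rule indep_sets_mono_sets[OF indep[unfolded indep_set_def]]) (use sub in \<open>auto split: bool.split\<close>)
  then have "indep_var borel U borel (X j)"
    using U X j unfolding indep_var_eq sets_vimage_algebra sq_int_def by simp
  then show ?thesis
    using U X j sq_int_integrable by (intro indep_var_lebesgue_integral) auto
qed

end

lemma measurable_vecX: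
  "(\<And>j. j \<in> {1..m} \<Longrightarrow> X j \<in> borel_measurable M) \<Longrightarrow> vecX m X \<in> M \<rightarrow>\<^sub>M PiM {1..m} (\<lambda>_. borel)"
  unfolding vecX_def by (rule measurable_restrict) auto

lemma subalgebra_sigX:
  assumes "\<And>j. j \<in> {1..m} \<Longrightarrow> X j \<in> borel_measurable M"
  shows "subalgebra M (sigX M m X)"
  unfolding subalgebra_def sigX_def
  using sets_image_in_sets[OF refl measurable_vecX[OF assms]] by simp

lemma measurable_comp_vecX_sigX:
  assumes "\<And>j. j \<in> {1..m} \<Longrightarrow> X j \<in> borel_measurable M"
    and "g \<in> borel_measurable (PiM {1..m} (\<lambda>_. borel))"
  shows "(\<lambda>w. g (vecX m X w)) \<in> borel_measurable (sigX M m X)"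
proof -
  have "vecX m X \<in> space M \<rightarrow> space (PiM {1..m} (\<lambda>_. borel))"
    using measurable_space[OF measurable_vecX[OF assms(1)]] by auto
  then have "vecX m X \<in> sigX M m X \<rightarrow>\<^sub>M PiM {1..m} (\<lambda>_. borel)"
    unfolding sigX_def by (rule measurable_vimage_algebra1)
  then show ?thesis
    using assms(2) by (rule measurable_compose)
qed

lemma measurable_affine_comb_sigX:
  assumes "\<And>j. j \<in> {1..m} \<Longrightarrow> X j \<in> borel_measurable M" "J \<subseteq> {1..m}"
  shows "affine_comb X c J \<in> borel_measurable (sigX M m X)"
proof -
  have "X j \<in> borel_measurable (sigX M m X)" if "j \<in> J" for j
  proof -
    have "(\<lambda>w. (\<lambda>x. x j) (vecX m X w)) \<in> borel_measurable (sigX M m X)"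
      using that assms by (intro measurable_comp_vecX_sigX) auto
    moreover have "(\<lambda>w. (\<lambda>x. x j) (vecX m X w)) = X j"
      using that assms(2) unfolding vecX_def by auto
    ultimately show ?thesis by simp
  qed
  then show ?thesis
    unfolding affine_comb_def[abs_def] by (auto intro!: borel_measurable_add borel_measurable_sum)
qed

section \<open>Partial mean impacts\<close>

locale partial_regression = prob_space +
  fixes X :: "nat \<Rightarrow> 'a \<Rightarrow> real" and m k :: nat
  assumes sq_int_X: "\<And>j. j \<in> {1..m} \<Longrightarrow> sq_int M (X j)"
    and k_in: "k \<in> {1..m}"
    and nondegenerate: "\<And>\<eta> j. (AE w in M. affine_comb X \<eta> {1..m} w = 0) \<Longrightarrow> j \<in> {0..m} \<Longrightarrow> \<eta> j = 0"
begin

abbreviation others :: "nat set" where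
  "others \<equiv> {1..m} - {k}"

abbreviation X_tilde :: "(nat \<Rightarrow> real) \<Rightarrow> 'a \<Rightarrow> real" where
  "X_tilde \<beta> \<equiv> residual X (X k) \<beta> others"

lemma finite_others: "finite others"
  by simp

lemma zero_notin_others: "0 \<notin> others"
  by simp

lemma sq_int_others: "j \<in> others \<Longrightarrow> sq_int M (X j)"
  using sq_int_X by simp

lemma sq_int_X_k: "sq_int M (X k)"
  using sq_int_X k_in .

lemma sq_int_X_tilde: "sq_int M (X_tilde \<beta>)"
  using finite_others sq_int_others sq_int_X_k by (rule sq_int_residual)

lemma X_tilde_eq_affine_comb:
  "X_tilde \<beta> = affine_comb X (\<lambda>j. if j = k then 1 else - \<beta> j) {1..m}"
proof
  fix w
  have "k \<noteq> 0"
    using k_in by simp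
  then have "affine_comb X (\<lambda>j. if j = k then 1 else - \<beta> j) {1..m} w
      = X k w + affine_comb X (\<lambda>j. if j = k then 1 else - \<beta> j) others w"
    using k_in by (subst affine_comb_remove[of _ k]) auto
  also have "\<dots> = X_tilde \<beta> w"
    unfolding affine_comb_def residual_def using \<open>k \<noteq> 0\<close>
    by (simp add: sum_negf)
  finally show "X_tilde \<beta> w = affine_comb X (\<lambda>j. if j = k then 1 else - \<beta> j) {1..m} w" ..
qed

lemma X_tilde_variance_pos: "0 < (\<integral>w. (X_tilde \<beta> w)^2 \<partial>M)"
proof (rule ccontr)
  assume "\<not> ?thesis"
  then have "(\<integral>w. (X_tilde \<beta> w)^2 \<partial>M) = 0"
    by (simp add: antisym not_less)
  then have "AE w in M. (X_tilde \<beta> w)^2 = 0"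
    using sq_int_X_tilde[of \<beta>] integral_nonneg_eq_0_iff_AE[where f = "\<lambda>w. (X_tilde \<beta> w)^2"]
    unfolding sq_int_def by simp
  then have "AE w in M. affine_comb X (\<lambda>j. if j = k then 1 else - \<beta> j) {1..m} w = 0"
    unfolding X_tilde_eq_affine_comb by simp
  then have "(\<lambda>j. if j = k then 1 else - \<beta> j) k = (0::real)"
    using k_in by (intro nondegenerate) auto
  then show False
    by simp
qed

lemma orth_X_tilde_exists: "\<exists>\<beta>. orth_affine M X others (X_tilde \<beta>)"
  using finite_others zero_notin_others sq_int_others sq_int_X_k by (rule orth_residual_exists)

lemma integral_mult_X_k_eq_X_tilde:
  assumes "sq_int M g" "orth_affine M X others g"
  shows "(\<integral>w. g w * X k w \<partial>M) = (\<integral>w. g w * X_tilde \<beta> w \<partial>M)"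
  using orth_affine_integral_residual[OF finite_others sq_int_others assms sq_int_X_k] by simp

lemma integral_mult_affine_comb_eq_coeff_k:
  assumes "sq_int M g" "orth_affine M X others g"
  shows "(\<integral>w. g w * affine_comb X \<theta> {1..m} w \<partial>M) = \<theta> k * (\<integral>w. g w * X k w \<partial>M)"
proof -
  have "k \<noteq> 0"
    using k_in by simp
  then have "(\<lambda>w. g w * affine_comb X \<theta> {1..m} w)
      = (\<lambda>w. \<theta> k * (g w * X k w) + g w * affine_comb X \<theta> others w)"
    using k_in by (subst affine_comb_remove[of _ k]) (auto simp: algebra_simps)
  moreover have "integrable M (\<lambda>w. g w * X k w)" "integrable M (\<lambda>w. g w * affine_comb X \<theta> others w)"
    using assms(1) sq_int_X_k sq_int_affine_comb[OF finite_others sq_int_others]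
    by (auto intro: sq_int_integrable_mult)
  ultimately show ?thesis
    using orth_affine_integral_affine_comb[OF finite_others sq_int_others assms] by simp
qed

lemma H_lin_set_memD:
  assumes "d \<in> H_lin_set M m X k"
  obtains \<eta> where "d = affine_comb X \<eta> {1..m}" "sq_int M d" "orth_affine M X others d"
    "(\<integral>w. (d w)^2 \<partial>M) = 1"
proof -
  obtain \<eta> where "d = affine_comb X \<eta> {1..m}"
    using assms unfolding H_lin_set_def affine_comb_def[abs_def] by auto
  moreover have "sq_int M (affine_comb X \<eta> {1..m})"
    using sq_int_X by (intro sq_int_affine_comb) auto
  ultimately show thesis
    using assms that unfolding H_lin_set_def orth_affine_def by auto
qed

lemma H_set_memD:
  assumes "d \<in> H_set M m X k"
  shows "sq_int M d" "orth_affine M X others d" "(\<integral>w. (d w)^2 \<partial>M) = 1"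
  using assms unfolding H_set_def orth_affine_def by auto

lemma H_lin_set_subset_H_set: "H_lin_set M m X k \<subseteq> H_set M m X k"
proof
  fix d
  assume d: "d \<in> H_lin_set M m X k"
  then obtain \<eta> where \<eta>: "d = affine_comb X \<eta> {1..m}" and "sq_int M d"
    by (rule H_lin_set_memD)
  define g where "g x = \<eta> 0 + (\<Sum>j=1..m. \<eta> j * x j)" for x :: "nat \<Rightarrow> real"
  have "g \<in> borel_measurable (PiM {1..m} (\<lambda>_. borel))"
    unfolding g_def by measurable
  moreover have "d = (\<lambda>w. g (vecX m X w))"
    unfolding \<eta> g_def vecX_def affine_comb_def by auto
  ultimately show "d \<in> H_set M m X k"
    using d \<open>sq_int M d\<close> unfolding H_set_def H_lin_set_def by blast
qed

lemma scaled_X_tilde_in_H_lin_set: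
  assumes orth: "orth_affine M X others (X_tilde \<beta>)"
    and b: "b^2 * (\<integral>w. (X_tilde \<beta> w)^2 \<partial>M) = 1"
  shows "(\<lambda>w. b * X_tilde \<beta> w) \<in> H_lin_set M m X k"
proof -
  define \<eta> where "\<eta> j = b * (if j = k then 1 else - \<beta> j)" for j
  have "(\<lambda>w. b * X_tilde \<beta> w) = (\<lambda>w. \<eta> 0 + (\<Sum>j=1..m. \<eta> j * X j w))"
    unfolding X_tilde_eq_affine_comb affine_comb_mult \<eta>_def by (simp add: affine_comb_def)
  moreover have "(\<integral>w. b * X_tilde \<beta> w \<partial>M) = 0"
    "\<forall>j\<in>{1..m}. j \<noteq> k \<longrightarrow> (\<integral>w. X j w * (b * X_tilde \<beta> w) \<partial>M) = 0"
    using orth unfolding orth_affine_def by (auto simp: mult.left_commute)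
  moreover have "(\<integral>w. (b * X_tilde \<beta> w)^2 \<partial>M) = 1"
    using b by (simp add: power_mult_distrib)
  ultimately show ?thesis
    unfolding H_lin_set_def mem_Collect_eq by blast
qed

lemma H_lin_set_decompose:
  assumes orth: "orth_affine M X others (X_tilde \<beta>)" and d: "d \<in> H_lin_set M m X k"
  obtains t s where "\<And>w. d w = t * X_tilde \<beta> w + s w" "sq_int M s" "(\<integral>w. (s w)^2 \<partial>M) = 0"
proof -
  obtain \<eta> where \<eta>: "d = affine_comb X \<eta> {1..m}" and d_sq: "sq_int M d"
      and d_orth: "orth_affine M X others d"
    using d by (rule H_lin_set_memD)
  define s where "s = affine_comb X (\<lambda>j. \<eta> j + \<eta> k * \<beta> j) others"
  have s_sq: "sq_int M s"
    unfolding s_def using finite_others sq_int_others by (rule sq_int_affine_comb)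
  have split: "d w = \<eta> k * X_tilde \<beta> w + s w" for w
  proof -
    have "k \<noteq> 0"
      using k_in by simp
    then have "d w = \<eta> k * X k w + affine_comb X \<eta> others w"
      unfolding \<eta> using k_in by (subst affine_comb_remove[of _ k]) auto
    then show ?thesis
      unfolding s_def affine_comb_def residual_def
      by (simp add: algebra_simps sum.distrib sum_distrib_left)
  qed
  \<comment> \<open>s lies in the affine span of the others, to which both d and the residual are orthogonal.\<close>
  have "(s w)^2 = d w * s w - \<eta> k * (X_tilde \<beta> w * s w)" for w
    using split[of w] by (simp add: power2_eq_square algebra_simps)
  then have "(\<integral>w. (s w)^2 \<partial>M) = (\<integral>w. d w * s w - \<eta> k * (X_tilde \<beta> w * s w) \<partial>M)"
    by simp
  also have "\<dots> = (\<integral>w. d w * s w \<partial>M) - \<eta> k * (\<integral>w. X_tilde \<beta> w * s w \<partial>M)"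
    using sq_int_integrable_mult[OF d_sq s_sq] sq_int_integrable_mult[OF sq_int_X_tilde s_sq]
    by simp
  also have "\<dots> = 0"
    unfolding s_def
    using orth_affine_integral_affine_comb[OF finite_others sq_int_others d_sq d_orth]
      orth_affine_integral_affine_comb[OF finite_others sq_int_others sq_int_X_tilde orth]
    by simp
  finally show thesis
    using that split s_sq by blast
qed

lemma H_lin_set_integral_eq_scaled_X_tilde:
  assumes orth: "orth_affine M X others (X_tilde \<beta>)" and d: "d \<in> H_lin_set M m X k"
  obtains t where "t^2 * (\<integral>w. (X_tilde \<beta> w)^2 \<partial>M) = 1"
    "\<And>Z. sq_int M Z \<Longrightarrow> (\<integral>w. Z w * d w \<partial>M) = t * (\<integral>w. Z w * X_tilde \<beta> w \<partial>M)"
proof -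
  obtain t s where split: "\<And>w. d w = t * X_tilde \<beta> w + s w"
      and s_sq: "sq_int M s" and s_null: "(\<integral>w. (s w)^2 \<partial>M) = 0"
    using H_lin_set_decompose[OF orth d] by blast
  obtain d_sq: "sq_int M d" and d_norm: "(\<integral>w. (d w)^2 \<partial>M) = 1"
    using d by (rule H_lin_set_memD)
  have Z_d: "(\<integral>w. Z w * d w \<partial>M) = t * (\<integral>w. Z w * X_tilde \<beta> w \<partial>M)" if Z: "sq_int M Z" for Z
  proof -
    have "(\<integral>w. Z w * s w \<partial>M) = 0"
      using Cauchy_Schwarz_integral[OF Z s_sq] s_null by simp
    moreover have "(\<integral>w. Z w * d w \<partial>M) = t * (\<integral>w. Z w * X_tilde \<beta> w \<partial>M) + (\<integral>w. Z w * s w \<partial>M)"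
      unfolding split distrib_left mult.left_commute[of "Z _"]
      using sq_int_integrable_mult[OF Z sq_int_X_tilde] sq_int_integrable_mult[OF Z s_sq] by simp
    ultimately show ?thesis
      by simp
  qed
  have "1 = (\<integral>w. d w * d w \<partial>M)"
    using d_norm by (simp add: power2_eq_square)
  also have "\<dots> = t * (\<integral>w. X_tilde \<beta> w * d w \<partial>M)"
    using Z_d[OF d_sq] by (simp add: mult.commute)
  also have "\<dots> = t^2 * (\<integral>w. (X_tilde \<beta> w)^2 \<partial>M)"
    using Z_d[OF sq_int_X_tilde] by (simp add: power2_eq_square)
  finally show thesis
    using that Z_d by simp
qed

lemma partial_lin_impact_eq_abs_cov_div_sd:
  assumes orth: "orth_affine M X others (X_tilde \<beta>)" and Z: "sq_int M Z"
  shows "partial_lin_impact M m X k Z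
    = \<bar>\<integral>w. Z w * X_tilde \<beta> w \<partial>M\<bar> / sqrt (\<integral>w. (X_tilde \<beta> w)^2 \<partial>M)"
proof -
  let ?A = "\<integral>w. Z w * X_tilde \<beta> w \<partial>M"
  let ?V = "\<integral>w. (X_tilde \<beta> w)^2 \<partial>M"
  have "(\<lambda>d. \<integral>w. Z w * d w \<partial>M) ` H_lin_set M m X k = {b * ?A | b. b^2 * ?V = 1}"
  proof (intro equalityI subsetI)
    fix x
    assume "x \<in> (\<lambda>d. \<integral>w. Z w * d w \<partial>M) ` H_lin_set M m X k"
    then obtain d where d: "d \<in> H_lin_set M m X k" and x: "x = (\<integral>w. Z w * d w \<partial>M)"
      by blast
    obtain t where "t^2 * ?V = 1" "x = t * ?A"
      using H_lin_set_integral_eq_scaled_X_tilde[OF orth d] Z x by metis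
    then show "x \<in> {b * ?A | b. b^2 * ?V = 1}"
      by blast
  next
    fix x
    assume "x \<in> {b * ?A | b. b^2 * ?V = 1}"
    then obtain b where "x = b * ?A" "b^2 * ?V = 1"
      by blast
    then show "x \<in> (\<lambda>d. \<integral>w. Z w * d w \<partial>M) ` H_lin_set M m X k"
      using scaled_X_tilde_in_H_lin_set[OF orth]
      by (intro image_eqI[where x = "\<lambda>w. b * X_tilde \<beta> w"]) (auto simp: mult.left_commute)
  qed
  then show ?thesis
    unfolding partial_lin_impact_def using Sup_scaled_eq_abs_div_sqrt[OF X_tilde_variance_pos]
    by simp
qed

lemma partial_lin_impact_eq_abs_coeff_mult_sd:
  assumes orth: "orth_affine M X others (X_tilde \<beta>)" and Z: "sq_int M Z"
    and cov: "(\<integral>w. X_tilde \<beta> w * Z w \<partial>M) = \<theta> * (\<integral>w. (X_tilde \<beta> w)^2 \<partial>M)"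
  shows "partial_lin_impact M m X k Z = \<bar>\<theta>\<bar> * sqrt (\<integral>w. (X_tilde \<beta> w)^2 \<partial>M)"
proof -
  have "0 < (\<integral>w. (X_tilde \<beta> w)^2 \<partial>M)"
    by (rule X_tilde_variance_pos)
  then show ?thesis
    unfolding partial_lin_impact_eq_abs_cov_div_sd[OF orth Z] mult.commute[of "Z _"] cov abs_mult
    by (simp add: real_div_sqrt flip: times_divide_eq_right)
qed

lemma partial_lin_impact_X_k:
  assumes orth: "orth_affine M X others (X_tilde \<beta>)"
  shows "partial_lin_impact M m X k (X k) = sqrt (\<integral>w. (X_tilde \<beta> w)^2 \<partial>M)"
proof -
  have "(\<integral>w. X_tilde \<beta> w * X k w \<partial>M) = 1 * (\<integral>w. (X_tilde \<beta> w)^2 \<partial>M)"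
    using integral_mult_X_k_eq_X_tilde[OF sq_int_X_tilde orth] by (simp add: power2_eq_square)
  from partial_lin_impact_eq_abs_coeff_mult_sd[OF orth sq_int_X_k this] show ?thesis
    by simp
qed

lemma H_set_integral_le_sqrt:
  assumes "d \<in> H_set M m X k" "sq_int M Z"
  shows "(\<integral>w. Z w * d w \<partial>M) \<le> sqrt (\<integral>w. (Z w)^2 \<partial>M)"
  using Cauchy_Schwarz_integral[OF assms(2) H_set_memD(1)[OF assms(1)]] H_set_memD(3)[OF assms(1)]
  by simp

lemma H_lin_set_nonempty: "H_lin_set M m X k \<noteq> {}"
proof -
  obtain \<beta> where orth: "orth_affine M X others (X_tilde \<beta>)"
    using orth_X_tilde_exists by blast
  have "(1 / sqrt (\<integral>w. (X_tilde \<beta> w)^2 \<partial>M))^2 * (\<integral>w. (X_tilde \<beta> w)^2 \<partial>M) = 1"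
    using X_tilde_variance_pos[of \<beta>] by (simp add: power_divide)
  then show ?thesis
    using scaled_X_tilde_in_H_lin_set[OF orth] by blast
qed

lemma partial_lin_impact_le_partial_impact:
  assumes "sq_int M Z"
  shows "partial_lin_impact M m X k Z \<le> partial_impact M m X k Z"
  unfolding partial_lin_impact_def partial_impact_def
proof (rule cSup_subset_mono)
  show "bdd_above ((\<lambda>d. \<integral>w. Z w * d w \<partial>M) ` H_set M m X k)"
    using H_set_integral_le_sqrt[OF _ assms] by (rule bdd_aboveI2)
qed (use H_lin_set_nonempty H_lin_set_subset_H_set in auto)

lemma partial_impact_X_k:
  assumes orth: "orth_affine M X others (X_tilde \<beta>)"
  shows "partial_impact M m X k (X k) = sqrt (\<integral>w. (X_tilde \<beta> w)^2 \<partial>M)"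
  unfolding partial_impact_def
proof (rule cSup_eq_maximum)
  let ?V = "\<integral>w. (X_tilde \<beta> w)^2 \<partial>M"
  have V: "0 < ?V"
    by (rule X_tilde_variance_pos)
  have "(1 / sqrt ?V)^2 * ?V = 1"
    using V by (simp add: power_divide)
  then have mem: "(\<lambda>w. 1 / sqrt ?V * X_tilde \<beta> w) \<in> H_set M m X k"
    using scaled_X_tilde_in_H_lin_set[OF orth] H_lin_set_subset_H_set by blast
  have "(\<integral>w. X k w * (1 / sqrt ?V * X_tilde \<beta> w) \<partial>M) = sqrt ?V"
    using integral_mult_X_k_eq_X_tilde[OF sq_int_X_tilde orth] V
    by (simp add: mult.commute power2_eq_square real_div_sqrt)
  from image_eqI[where f = "\<lambda>d. \<integral>w. X k w * d w \<partial>M", OF this[symmetric] mem]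
  show "sqrt ?V \<in> (\<lambda>d. \<integral>w. X k w * d w \<partial>M) ` H_set M m X k" .
next
  fix x
  assume "x \<in> (\<lambda>d. \<integral>w. X k w * d w \<partial>M) ` H_set M m X k"
  then obtain d where d: "d \<in> H_set M m X k" and x: "x = (\<integral>w. X k w * d w \<partial>M)"
    by blast
  have "x = (\<integral>w. d w * X_tilde \<beta> w \<partial>M)"
    unfolding x using integral_mult_X_k_eq_X_tilde[OF H_set_memD(1,2)[OF d]]
    by (simp add: mult.commute)
  also have "\<dots> = (\<integral>w. X_tilde \<beta> w * d w \<partial>M)"
    by (simp add: mult.commute)
  finally show "x \<le> sqrt (\<integral>w. (X_tilde \<beta> w)^2 \<partial>M)"
    using H_set_integral_le_sqrt[OF d sq_int_X_tilde] by simp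
qed

lemma integral_X_tilde_mult_affine_comb:
  assumes orth: "orth_affine M X others (X_tilde \<beta>)"
  shows "(\<integral>w. X_tilde \<beta> w * affine_comb X \<theta> {1..m} w \<partial>M) = \<theta> k * (\<integral>w. (X_tilde \<beta> w)^2 \<partial>M)"
  using integral_mult_affine_comb_eq_coeff_k[OF sq_int_X_tilde orth]
    integral_mult_X_k_eq_X_tilde[OF sq_int_X_tilde orth]
  by (simp add: power2_eq_square)

lemma partial_lin_impact_eq_lin_impact_X_tilde:
  assumes min: "\<And>\<beta>'. (\<integral>w. (X_tilde \<beta> w)^2 \<partial>M) \<le> (\<integral>w. (X_tilde \<beta>' w)^2 \<partial>M)"
    and Z: "sq_int M Z"
  shows "partial_lin_impact M m X k Z = lin_impact M (X_tilde \<beta>) Z"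
proof -
  have orth: "orth_affine M X others (X_tilde \<beta>)"
    using finite_others zero_notin_others sq_int_others sq_int_X_k min
    by (rule least_squares_imp_orth_affine)
  then have "expectation (X_tilde \<beta>) = 0"
    unfolding orth_affine_def by simp
  then show ?thesis
    using partial_lin_impact_eq_abs_cov_div_sd[OF orth Z]
      lin_impact_eq_abs_cov_div_sd[OF sq_int_X_tilde] X_tilde_variance_pos
    by simp
qed

lemma abs_regression_coeff_eq_partial_lin_impact_ratio:
  assumes min: "\<And>\<theta>'. (\<integral>w. (residual X Y \<theta> {1..m} w)^2 \<partial>M)
      \<le> (\<integral>w. (residual X Y \<theta>' {1..m} w)^2 \<partial>M)"
    and Y: "sq_int M Y"
  shows "\<bar>\<theta> k\<bar> = partial_lin_impact M m X k Y / partial_lin_impact M m X k (X k)"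
proof -
  obtain \<beta> where orth: "orth_affine M X others (X_tilde \<beta>)"
    using orth_X_tilde_exists by blast
  let ?e = "residual X Y \<theta> {1..m}"
  have e: "sq_int M ?e" "orth_affine M X {1..m} ?e"
    using sq_int_X Y min by (auto intro: sq_int_residual least_squares_imp_orth_affine)
  \<comment> \<open>The residual of the fit of Y is orthogonal to all regressors, so also to X_tilde.\<close>
  have "(\<integral>w. ?e w * X_tilde \<beta> w \<partial>M) = 0"
    using orth_affine_integral_affine_comb[OF _ _ e] sq_int_X
    unfolding X_tilde_eq_affine_comb by simp
  moreover have "(\<lambda>w. X_tilde \<beta> w * Y w)
      = (\<lambda>w. X_tilde \<beta> w * ?e w + X_tilde \<beta> w * affine_comb X \<theta> {1..m} w)"
    by (simp add: residual_eq_diff_affine_comb algebra_simps)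
  moreover have "integrable M (\<lambda>w. X_tilde \<beta> w * ?e w)"
    "integrable M (\<lambda>w. X_tilde \<beta> w * affine_comb X \<theta> {1..m} w)"
    using sq_int_X_tilde e sq_int_affine_comb[of "{1..m}" X] sq_int_X
    by (auto intro: sq_int_integrable_mult)
  ultimately have "(\<integral>w. X_tilde \<beta> w * Y w \<partial>M) = \<theta> k * (\<integral>w. (X_tilde \<beta> w)^2 \<partial>M)"
    using integral_X_tilde_mult_affine_comb[OF orth] by (simp add: mult.commute)
  then show ?thesis
    using partial_lin_impact_eq_abs_coeff_mult_sd[OF orth Y] partial_lin_impact_X_k[OF orth]
      X_tilde_variance_pos[of \<beta>]
    by simp
qed

lemma partial_impact_X_k_eq_partial_lin_impact:
  "partial_impact M m X k (X k) = partial_lin_impact M m X k (X k)"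
proof -
  obtain \<beta> where "orth_affine M X others (X_tilde \<beta>)"
    using orth_X_tilde_exists by blast
  then show ?thesis
    using partial_impact_X_k partial_lin_impact_X_k by simp
qed

lemma partial_lin_impact_eq_lin_impact_if_indep:
  assumes indep: "indep_set (sets (vimage_algebra (space M) (X k) borel))
      (sets (vimage_algebra (space M) (\<lambda>w. \<lambda>j\<in>others. X j w) (PiM others (\<lambda>_. borel))))"
    and Z: "sq_int M Z"
  shows "partial_lin_impact M m X k Z = lin_impact M (X k) Z"
proof -
  \<comment> \<open>Uncorrelatedness makes the intercept alone a solution of the normal equations.\<close>
  define \<beta> :: "nat \<Rightarrow> real" where "\<beta> j = (if j = 0 then expectation (X k) else 0)" for j
  have X_tilde: "X_tilde \<beta> = (\<lambda>w. X k w - expectation (X k))"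
    by (auto simp: residual_def \<beta>_def)
  have "(\<integral>w. X j w * X_tilde \<beta> w \<partial>M) = 0" if "j \<in> others" for j
  proof -
    have "(\<integral>w. X j w * X_tilde \<beta> w \<partial>M) = (\<integral>w. X k w * X j w \<partial>M) - expectation (X k) * expectation (X j)"
      unfolding X_tilde right_diff_distrib
      using sq_int_integrable_mult[OF sq_int_others[OF that] sq_int_X_k]
        sq_int_integrable[OF sq_int_others[OF that]]
      by (simp add: mult.commute)
    then show ?thesis
      using indep_set_vimage_imp_integral_mult[OF indep sq_int_X_k sq_int_others that] by simp
  qed
  moreover have "expectation (X_tilde \<beta>) = 0"
    unfolding X_tilde using sq_int_integrable[OF sq_int_X_k] by (simp add: prob_space)
  ultimately have orth: "orth_affine M X others (X_tilde \<beta>)"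
    unfolding orth_affine_def by blast
  show ?thesis
    using partial_lin_impact_eq_abs_cov_div_sd[OF orth Z]
      lin_impact_eq_abs_cov_div_sd[OF sq_int_X_k] X_tilde_variance_pos[of \<beta>]
    unfolding X_tilde by simp
qed

lemma measurable_X: "j \<in> {1..m} \<Longrightarrow> X j \<in> borel_measurable M"
  using sq_int_X unfolding sq_int_def by blast

lemma H_set_measurable_sigX:
  assumes "d \<in> H_set M m X k"
  shows "d \<in> borel_measurable (sigX M m X)"
proof -
  obtain g where g: "g \<in> borel_measurable (PiM {1..m} (\<lambda>_. borel))"
      and d: "d = (\<lambda>w. g (vecX m X w))"
    using assms unfolding H_set_def by blast
  show ?thesis
    unfolding d using measurable_X g by (rule measurable_comp_vecX_sigX)
qed

lemma integral_mult_eq_coeff_k_if_linear_cond_exp: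
  assumes Y: "sq_int M Y"
    and cond_exp: "AE w in M. real_cond_exp M (sigX M m X) Y w = affine_comb X \<theta> {1..m} w"
    and f: "f \<in> borel_measurable (sigX M m X)" "sq_int M f" "orth_affine M X others f"
  shows "(\<integral>w. f w * Y w \<partial>M) = \<theta> k * (\<integral>w. f w * X_tilde \<beta> w \<partial>M)"
proof -
  have "(\<integral>w. f w * Y w \<partial>M) = (\<integral>w. f w * affine_comb X \<theta> {1..m} w \<partial>M)"
    using subalgebra_sigX[OF measurable_X] Y sq_int_affine_comb[of "{1..m}" X] sq_int_X cond_exp f
    by (intro integral_mult_cond_exp_eq) auto
  then show ?thesis
    using integral_mult_affine_comb_eq_coeff_k[OF f(2,3)] integral_mult_X_k_eq_X_tilde[OF f(2,3)]
    by simp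
qed

lemma partial_impact_eq_partial_lin_impact_if_linear_cond_exp:
  assumes Y: "sq_int M Y"
    and cond_exp: "AE w in M. real_cond_exp M (sigX M m X) Y w = affine_comb X \<theta> {1..m} w"
  shows "partial_impact M m X k Y = partial_lin_impact M m X k Y"
proof -
  obtain \<beta> where orth: "orth_affine M X others (X_tilde \<beta>)"
    using orth_X_tilde_exists by blast
  let ?V = "\<integral>w. (X_tilde \<beta> w)^2 \<partial>M"
  have "X_tilde \<beta> \<in> borel_measurable (sigX M m X)"
    unfolding X_tilde_eq_affine_comb using measurable_X by (intro measurable_affine_comb_sigX) auto
  then have "partial_lin_impact M m X k Y = \<bar>\<theta> k\<bar> * sqrt ?V"
    using integral_mult_eq_coeff_k_if_linear_cond_exp[OF Y cond_exp _ sq_int_X_tilde orth]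
    by (intro partial_lin_impact_eq_abs_coeff_mult_sd[OF orth Y]) (simp add: power2_eq_square)
  moreover have "partial_impact M m X k Y \<le> \<bar>\<theta> k\<bar> * sqrt ?V"
    unfolding partial_impact_def
  proof (rule cSup_least)
    show "(\<lambda>d. \<integral>w. Y w * d w \<partial>M) ` H_set M m X k \<noteq> {}"
      using H_lin_set_nonempty H_lin_set_subset_H_set by blast
  next
    fix x
    assume "x \<in> (\<lambda>d. \<integral>w. Y w * d w \<partial>M) ` H_set M m X k"
    then obtain d where d: "d \<in> H_set M m X k" and x: "x = (\<integral>w. Y w * d w \<partial>M)"
      by blast
    have "x = \<theta> k * (\<integral>w. d w * X_tilde \<beta> w \<partial>M)"
      unfolding x using integral_mult_eq_coeff_k_if_linear_cond_exp[OF Y cond_exp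
        H_set_measurable_sigX[OF d] H_set_memD(1,2)[OF d]]
      by (simp add: mult.commute)
    also have "\<dots> \<le> \<bar>\<theta> k\<bar> * \<bar>\<integral>w. d w * X_tilde \<beta> w \<partial>M\<bar>"
      using abs_ge_self[of "\<theta> k * (\<integral>w. d w * X_tilde \<beta> w \<partial>M)"] by (simp add: abs_mult)
    also have "\<dots> \<le> \<bar>\<theta> k\<bar> * sqrt ?V"
      using Cauchy_Schwarz_integral[OF H_set_memD(1)[OF d] sq_int_X_tilde] H_set_memD(3)[OF d]
      by (simp add: mult_left_mono)
    finally show "x \<le> \<bar>\<theta> k\<bar> * sqrt ?V" .
  qed
  ultimately show ?thesis
    using partial_lin_impact_le_partial_impact[OF Y] by simp
qed

end

theorem theorem3:
  fixes M :: "'a measure" and Y :: "'a \<Rightarrow> real" and X :: "nat \<Rightarrow> 'a \<Rightarrow> real"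
    and m k :: nat
  assumes P: "prob_space M"
    and SY: "sq_int M Y"
    and SX: "\<forall>j\<in>{1..m}. sq_int M (X j)"
    and K: "k \<in> {1..m}"
    and nondeg: "\<forall>\<eta> :: nat \<Rightarrow> real.
        (AE w in M. \<eta> 0 + (\<Sum>j=1..m. \<eta> j * X j w) = 0) \<longrightarrow> (\<forall>j\<in>{0..m}. \<eta> j = 0)"
  shows
    \<comment> \<open>(a)\<close>
    "(\<forall>\<beta> :: nat \<Rightarrow> real.
        (\<forall>\<beta>' :: nat \<Rightarrow> real.
           integral\<^sup>L M (\<lambda>w. (X k w - \<beta> 0 - (\<Sum>j\<in>{1..m}-{k}. \<beta> j * X j w))^2)
           \<le> integral\<^sup>L M (\<lambda>w. (X k w - \<beta>' 0 - (\<Sum>j\<in>{1..m}-{k}. \<beta>' j * X j w))^2))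
        \<longrightarrow> partial_lin_impact M m X k Y
            = lin_impact M (\<lambda>w. X k w - \<beta> 0 - (\<Sum>j\<in>{1..m}-{k}. \<beta> j * X j w)) Y)
    \<and> \<comment> \<open>(b)\<close>
     (\<forall>\<theta> :: nat \<Rightarrow> real.
        (\<forall>\<theta>' :: nat \<Rightarrow> real.
           integral\<^sup>L M (\<lambda>w. (Y w - \<theta> 0 - (\<Sum>j=1..m. \<theta> j * X j w))^2)
           \<le> integral\<^sup>L M (\<lambda>w. (Y w - \<theta>' 0 - (\<Sum>j=1..m. \<theta>' j * X j w))^2))
        \<longrightarrow> \<bar>\<theta> k\<bar> = partial_lin_impact M m X k Y / partial_lin_impact M m X k (X k))
    \<and> \<comment> \<open>(c)\<close>
     (partial_impact M m X k Y \<ge> partial_lin_impact M m X k Y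
      \<and> partial_impact M m X k (X k) = partial_lin_impact M m X k (X k))
    \<and> \<comment> \<open>(d)\<close>
     (prob_space.indep_set M
          (sets (vimage_algebra (space M) (X k) borel))
          (sets (vimage_algebra (space M) (\<lambda>w. \<lambda>j\<in>{1..m}-{k}. X j w)
                   (PiM ({1..m}-{k}) (\<lambda>_. borel))))
        \<longrightarrow> partial_lin_impact M m X k Y = lin_impact M (X k) Y)
    \<and> \<comment> \<open>(e)\<close>
     (\<forall>\<theta> :: nat \<Rightarrow> real.
        (AE w in M. real_cond_exp M (sigX M m X) Y w = \<theta> 0 + (\<Sum>j=1..m. \<theta> j * X j w))
        \<longrightarrow> partial_impact M m X k Y = partial_lin_impact M m X k Y)"
proof -
  have "partial_regression M X m k"
    unfolding partial_regression_def partial_regression_axioms_def affine_comb_def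
    using P SX K nondeg by blast
  then interpret partial_regression M X m k .
  have X_tilde: "residual X (X k) \<beta> ({1..m} - {k})
      = (\<lambda>w. X k w - \<beta> 0 - (\<Sum>j\<in>{1..m}-{k}. \<beta> j * X j w))" for \<beta>
    by (simp add: fun_eq_iff residual_def)
  have Y_residual: "residual X Y \<theta> {1..m} = (\<lambda>w. Y w - \<theta> 0 - (\<Sum>j=1..m. \<theta> j * X j w))" for \<theta>
    by (simp add: fun_eq_iff residual_def)
  have linear_fit: "affine_comb X \<theta> {1..m} = (\<lambda>w. \<theta> 0 + (\<Sum>j=1..m. \<theta> j * X j w))" for \<theta>
    by (simp add: fun_eq_iff affine_comb_def)
  show ?thesis
    using partial_lin_impact_eq_lin_impact_X_tilde[OF _ SY]
      abs_regression_coeff_eq_partial_lin_impact_ratio[OF _ SY]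
      partial_lin_impact_le_partial_impact[OF SY] partial_impact_X_k_eq_partial_lin_impact
      partial_lin_impact_eq_lin_impact_if_indep[OF _ SY]
      partial_impact_eq_partial_lin_impact_if_linear_cond_exp[OF SY]
    unfolding X_tilde Y_residual linear_fit by blast
qed

end
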